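(* Fix $1<p<\infty$. Let $X$ and $Y$ be Banach spaces such that $X$ has the approximation property and $\mathcal A(X,Y)\subsetneq\mathcal K(X,Y)$. Let $Z_p:=\big(\bigoplus_{j=0}^\infty X_j\big)_{\ell^p}$ with $X_0=Y$ and $X_j=X$ for $j\ge1$, and for $\emptyset\neq A\subsetneq\mathbb N$ let \[ \mathcal I_A:=\{S\in\mathcal K(Z_p): P_0SJ_0\in\mathcal A(Y),\ P_0SJ_k\in\mathcal A(X,Y)\text{ for all }k\in A\}. \] Suppose $\emptyset\neq A,B\subsetneq\mathbb N$ and there is a permutation $\sigma:\mathbb N\to\mathbb N$ with $\sigma(A)=B$. Then $\mathcal I_A$ and $\mathcal I_B$ are isomorphic as Banach algebras. In particular this holds whenever $|A|=|B|\in\mathbb N\cup\{\infty\}$ and $|\mathbb N\setminus A|=|\mathbb N\setminus B|\in\mathbb N\cup\{\infty\}$.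
   Context: $\mathbb N=\{1,2,3,\ldots\}$; $|A|$ denotes cardinality. For Banach spaces $E,F$, $\mathcal K(E,F)$ denotes the compact operators and $\mathcal A(E,F)$ the operator-norm closure of the finite-rank operators $E\to F$; $\mathcal A(E)=\mathcal A(E,E)$. $P_m:Z_p\to X_m$ and $J_n:X_n\to Z_p$ ($m,n\ge0$) are the natural coordinate projections and inclusions. *)

theory Defs
  imports "HOL-Analysis.Analysis"
begin

definition finite_rank :: "('a::real_normed_vector \<Rightarrow> 'b::real_normed_vector) \<Rightarrow> bool" where
  "finite_rank T \<longleftrightarrow> bounded_linear T \<and> (\<exists>B. finite B \<and> range T \<subseteq> span B)"

definition approximable_op :: "('a::real_normed_vector \<Rightarrow> 'b::real_normed_vector) \<Rightarrow> bool" where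
  "approximable_op T \<longleftrightarrow> bounded_linear T \<and>
     (\<forall>e>0. \<exists>F. finite_rank F \<and> onorm (\<lambda>x. T x - F x) < e)"

definition compact_op :: "('a::real_normed_vector \<Rightarrow> 'b::real_normed_vector) \<Rightarrow> bool" where
  "compact_op T \<longleftrightarrow> bounded_linear T \<and> compact (closure (T ` cball 0 1))"

definition approximation_property :: "'a::banach itself \<Rightarrow> bool" where
  "approximation_property _ \<longleftrightarrow>
     (\<forall>K::'a set. compact K \<longrightarrow> (\<forall>e>0. \<exists>T::'a \<Rightarrow> 'a. finite_rank T \<and> (\<forall>x\<in>K. norm (T x - x) < e)))"

text \<open>An element of \<open>Z_p\<close> is represented by a pair (y, f): y is the 0-th coordinate
  (in Y) and f j is the j-th coordinate (in X) for j \<ge> 1; by convention f 0 = 0.\<close>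

definition Zp :: "real \<Rightarrow> ('y::banach \<times> (nat \<Rightarrow> 'x::banach)) set" where
  "Zp p = {(y, f). f 0 = 0 \<and> summable (\<lambda>j. norm (f j) powr p)}"

definition znorm :: "real \<Rightarrow> ('y::banach \<times> (nat \<Rightarrow> 'x::banach)) \<Rightarrow> real" where
  "znorm p z = (norm (fst z) powr p + (\<Sum>j. norm (snd z j) powr p)) powr (1 / p)"

definition zadd :: "('y::banach \<times> (nat \<Rightarrow> 'x::banach)) \<Rightarrow> ('y \<times> (nat \<Rightarrow> 'x)) \<Rightarrow> ('y \<times> (nat \<Rightarrow> 'x))" where
  "zadd z w = (fst z + fst w, \<lambda>j. snd z j + snd w j)"

definition zscale :: "real \<Rightarrow> ('y::banach \<times> (nat \<Rightarrow> 'x::banach)) \<Rightarrow> ('y \<times> (nat \<Rightarrow> 'x))" where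
  "zscale c z = (c *\<^sub>R fst z, \<lambda>j. c *\<^sub>R snd z j)"

definition zzero :: "'y::banach \<times> (nat \<Rightarrow> 'x::banach)" where
  "zzero = (0, \<lambda>_. 0)"

definition zminus :: "('y::banach \<times> (nat \<Rightarrow> 'x::banach)) \<Rightarrow> ('y \<times> (nat \<Rightarrow> 'x)) \<Rightarrow> ('y \<times> (nat \<Rightarrow> 'x))" where
  "zminus z w = zadd z (zscale (-1) w)"

definition P0 :: "('y::banach \<times> (nat \<Rightarrow> 'x::banach)) \<Rightarrow> 'y" where
  "P0 z = fst z"

definition J0 :: "'y::banach \<Rightarrow> ('y \<times> (nat \<Rightarrow> 'x::banach))" where
  "J0 y = (y, \<lambda>_. 0)"

definition Jk :: "nat \<Rightarrow> 'x::banach \<Rightarrow> ('y::banach \<times> (nat \<Rightarrow> 'x))" where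
  "Jk k x = (0, \<lambda>j. if j = k then x else 0)"   (* used for k \<ge> 1 *)

text \<open>Bounded operators on \<open>Z_p\<close>: linear maps of \<open>Z_p\<close> into itself, bounded for the
  \<open>\<ell>^p\<close>-norm; extensional (value \<open>zzero\<close> outside \<open>Z_p\<close>) so that operators are
  determined by their action on \<open>Z_p\<close>.\<close>
definition Bz :: "real \<Rightarrow> (('y::banach \<times> (nat \<Rightarrow> 'x::banach)) \<Rightarrow> ('y \<times> (nat \<Rightarrow> 'x))) set" where
  "Bz p = {S. (\<forall>z\<in>Zp p. S z \<in> Zp p)
           \<and> (\<forall>z\<in>Zp p. \<forall>w\<in>Zp p. S (zadd z w) = zadd (S z) (S w))
           \<and> (\<forall>c. \<forall>z\<in>Zp p. S (zscale c z) = zscale c (S z))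
           \<and> (\<exists>C. \<forall>z\<in>Zp p. znorm p (S z) \<le> C * znorm p z)
           \<and> (\<forall>z. z \<notin> Zp p \<longrightarrow> S z = zzero)}"

definition opnorm_z :: "real \<Rightarrow> (('y::banach \<times> (nat \<Rightarrow> 'x::banach)) \<Rightarrow> ('y \<times> (nat \<Rightarrow> 'x))) \<Rightarrow> real" where
  "opnorm_z p S = (SUP z\<in>{z\<in>Zp p. znorm p z \<le> 1}. znorm p (S z))"

definition Kz :: "real \<Rightarrow> (('y::banach \<times> (nat \<Rightarrow> 'x::banach)) \<Rightarrow> ('y \<times> (nat \<Rightarrow> 'x))) set" where
  "Kz p = {S\<in>Bz p. \<forall>u::nat \<Rightarrow> ('y \<times> (nat \<Rightarrow> 'x)).
              (\<forall>n. u n \<in> Zp p \<and> znorm p (u n) \<le> 1) \<longrightarrow>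
              (\<exists>r z. strict_mono r \<and> z \<in> Zp p \<and>
                     (\<lambda>n. znorm p (zminus (S (u (r n))) z)) \<longlonglongrightarrow> 0)}"

definition IA :: "real \<Rightarrow> nat set \<Rightarrow> (('y::banach \<times> (nat \<Rightarrow> 'x::banach)) \<Rightarrow> ('y \<times> (nat \<Rightarrow> 'x))) set" where
  "IA p A = {S\<in>Kz p. approximable_op (\<lambda>y::'y. P0 (S (J0 y)))
                  \<and> (\<forall>k\<in>A. approximable_op (\<lambda>x::'x. P0 (S (Jk k x))))}"

definition banach_alg_iso ::
  "real \<Rightarrow> (('y::banach \<times> (nat \<Rightarrow> 'x::banach)) \<Rightarrow> ('y \<times> (nat \<Rightarrow> 'x))) set
        \<Rightarrow> (('y \<times> (nat \<Rightarrow> 'x)) \<Rightarrow> ('y \<times> (nat \<Rightarrow> 'x))) set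
        \<Rightarrow> ((('y \<times> (nat \<Rightarrow> 'x)) \<Rightarrow> ('y \<times> (nat \<Rightarrow> 'x))) \<Rightarrow> (('y \<times> (nat \<Rightarrow> 'x)) \<Rightarrow> ('y \<times> (nat \<Rightarrow> 'x)))) \<Rightarrow> bool" where
  "banach_alg_iso p I J \<Phi> \<longleftrightarrow>
     bij_betw \<Phi> I J
     \<and> (\<forall>S\<in>I. \<forall>T\<in>I. \<Phi> (\<lambda>z. zadd (S z) (T z)) = (\<lambda>z. zadd (\<Phi> S z) (\<Phi> T z)))
     \<and> (\<forall>c. \<forall>S\<in>I. \<Phi> (\<lambda>z. zscale c (S z)) = (\<lambda>z. zscale c (\<Phi> S z)))
     \<and> (\<forall>S\<in>I. \<forall>T\<in>I. \<Phi> (S \<circ> T) = \<Phi> S \<circ> \<Phi> T)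
     \<and> (\<exists>C. \<forall>S\<in>I. opnorm_z p (\<Phi> S) \<le> C * opnorm_z p S)
     \<and> (\<exists>C. \<forall>S\<in>I. opnorm_z p S \<le> C * opnorm_z p (\<Phi> S))"

definition isomorphic_banach_alg ::
  "real \<Rightarrow> (('y::banach \<times> (nat \<Rightarrow> 'x::banach)) \<Rightarrow> ('y \<times> (nat \<Rightarrow> 'x))) set
        \<Rightarrow> (('y \<times> (nat \<Rightarrow> 'x)) \<Rightarrow> ('y \<times> (nat \<Rightarrow> 'x))) set \<Rightarrow> bool" where
  "isomorphic_banach_alg p I J \<longleftrightarrow> (\<exists>\<Phi>. banach_alg_iso p I J \<Phi>)"

end

theory Submission
  imports Defs
begin

text \<open>A permutation \<open>\<sigma>\<close> of \<open>\<nat>\<close> with \<open>\<sigma>(A) = B\<close>, extended by \<open>\<sigma>(0) = 0\<close>, induces an isometric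
  permutation \<open>U\<close> of the coordinates of \<open>Z_p\<close> with \<open>U J\<^sub>k = J\<^bsub>\<sigma> k\<^esub>\<close> and \<open>P\<^sub>0 U = P\<^sub>0\<close>.
  Conjugation \<open>S \<mapsto> U S U\<^sup>-\<^sup>1\<close> is then an isometric algebra automorphism of the compact
  operators on \<open>Z_p\<close>, and since \<open>P\<^sub>0 (U S U\<^sup>-\<^sup>1) J\<^sub>k = P\<^sub>0 S J\<^bsub>\<sigma>\<^sup>-\<^sup>1 k\<^esub>\<close> it carries \<open>\<I>\<^sub>A\<close> onto \<open>\<I>\<^sub>B\<close>.\<close>

lemma summable_reindex_bij_iff:
  fixes f :: "nat \<Rightarrow> real"
  assumes g: "bij g" and f: "\<And>n. 0 \<le> f n"
  shows "summable (f \<circ> g) \<longleftrightarrow> summable f"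
proof
  assume "summable (f \<circ> g)"
  then have "summable (f \<circ> g \<circ> inv g)"
    using bij_is_inj[OF bij_imp_bij_inv[OF g]] by (rule summable_reindex) (simp add: f)
  moreover have "f \<circ> g \<circ> inv g = f"
    using g by (auto simp: fun_eq_iff bij_is_surj surj_f_inv_f)
  ultimately show "summable f"
    by simp
next
  assume "summable f"
  from this bij_is_inj[OF g] f show "summable (f \<circ> g)"
    by (rule summable_reindex)
qed

lemma suminf_reindex_bij:
  fixes f :: "nat \<Rightarrow> real"
  assumes g: "bij g" and f: "\<And>n. 0 \<le> f n"
  shows "suminf (f \<circ> g) = suminf f"
proof (cases "summable f")
  case True
  then show ?thesis
    using g f by (intro suminf_reindex) (auto simp: bij_is_inj bij_is_surj)
next
  case False
  then have "\<not> summable (f \<circ> g)"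
    using summable_reindex_bij_iff[OF g f] by simp
  \<comment> \<open>both sides are then \<open>THE\<close> of the same empty predicate\<close>
  with False have "(\<lambda>s. (f \<circ> g) sums s) = (\<lambda>s. f sums s)"
    by (auto dest: sums_summable)
  then show ?thesis
    unfolding suminf_def by simp
qed

lemma ex_bij_betw_countable:
  assumes "countable A" "countable B"
    and "(finite A \<and> finite B \<and> card A = card B) \<or> (infinite A \<and> infinite B)"
  shows "\<exists>f. bij_betw f A B"
  using assms(3)
proof
  assume "finite A \<and> finite B \<and> card A = card B"
  then show ?thesis
    using finite_same_card_bij by blast
next
  assume "infinite A \<and> infinite B"
  then have "bij_betw (from_nat_into A) UNIV A" "bij_betw (from_nat_into B) UNIV B"
    using assms(1,2) by (auto intro: bij_betw_from_nat_into)
  then show ?thesis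
    by (blast intro: bij_betw_trans bij_betw_inv_into)
qed

lemma ex_bij_betw_mapping_onto:
  assumes U: "countable U" "A \<subseteq> U" "B \<subseteq> U"
    and card_in: "(finite A \<and> finite B \<and> card A = card B) \<or> (infinite A \<and> infinite B)"
    and card_out: "(finite (U - A) \<and> finite (U - B) \<and> card (U - A) = card (U - B))
                   \<or> (infinite (U - A) \<and> infinite (U - B))"
  shows "\<exists>s. bij_betw s U U \<and> s ` A = B"
proof -
  have "countable A" "countable B" "countable (U - A)" "countable (U - B)"
    using U countable_subset by blast+
  then obtain f g where f: "bij_betw f A B" and g: "bij_betw g (U - A) (U - B)"
    using ex_bij_betw_countable card_in card_out by metis
  have "bij_betw (\<lambda>x. if x \<in> A then f x else g x) (A \<union> (U - A)) (B \<union> (U - B))"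
    using f g by (intro bij_betw_disjoint_Un) auto
  moreover have "(\<lambda>x. if x \<in> A then f x else g x) ` A = B"
    using f by (simp add: bij_betw_def)
  ultimately show ?thesis
    using U by (metis Un_Diff_cancel Un_absorb1)
qed

lemma bij_inv_fixing:
  assumes "bij t" "t a = a"
  shows "bij (inv t)" "inv t a = a"
  using assms by (simp_all add: bij_imp_bij_inv inv_f_eq bij_is_inj)

definition zpermute :: "(nat \<Rightarrow> nat) \<Rightarrow> ('y \<times> (nat \<Rightarrow> 'x)) \<Rightarrow> ('y \<times> (nat \<Rightarrow> 'x))" where
  "zpermute t z = (fst z, snd z \<circ> t)"

lemma
  shows zpermute_zadd [simp]: "zpermute t (zadd z w) = zadd (zpermute t z) (zpermute t w)"
    and zpermute_zscale [simp]: "zpermute t (zscale c z) = zscale c (zpermute t z)"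
    and zpermute_zminus [simp]: "zpermute t (zminus z w) = zminus (zpermute t z) (zpermute t w)"
    and zpermute_zzero [simp]: "zpermute t zzero = zzero"
    and zpermute_J0 [simp]: "zpermute t (J0 y) = J0 y"
    and P0_zpermute [simp]: "P0 (zpermute t z) = P0 z"
  by (simp_all add: zpermute_def zadd_def zscale_def zminus_def zzero_def J0_def P0_def comp_def)

lemma zpermute_zpermute: "zpermute s (zpermute t z) = zpermute (t \<circ> s) z"
  by (simp add: zpermute_def comp_assoc)

lemma zpermute_inv:
  assumes "bij t"
  shows "zpermute t (zpermute (inv t) z) = z" "zpermute (inv t) (zpermute t z) = z"
  using surj_iff[THEN iffD1, OF bij_is_surj[OF assms]] inj_iff[THEN iffD1, OF bij_is_inj[OF assms]]
  by (simp_all add: zpermute_zpermute zpermute_def comp_assoc)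

lemma zpermute_Jk:
  assumes "bij t"
  shows "zpermute t (Jk k x) = Jk (inv t k) x"
  using assms by (auto simp: zpermute_def Jk_def fun_eq_iff bij_inv_eq_iff)

lemma zpermute_in_Zp_iff:
  assumes "bij t" "t 0 = 0"
  shows "zpermute t z \<in> Zp p \<longleftrightarrow> z \<in> Zp p"
  using assms summable_reindex_bij_iff[OF assms(1), of "\<lambda>j. norm (snd z j) powr p"]
  by (cases z) (simp add: zpermute_def Zp_def comp_def)

lemma znorm_zpermute:
  assumes "bij t"
  shows "znorm p (zpermute t z) = znorm p z"
  using suminf_reindex_bij[OF assms, of "\<lambda>j. norm (snd z j) powr p"]
  by (simp add: znorm_def zpermute_def comp_def)

text \<open>\<open>zpermute (inv t)\<close> is the operator \<open>U\<close> above, for \<open>\<sigma> = t\<close>.\<close>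
definition zconj :: "(nat \<Rightarrow> nat) \<Rightarrow> (('y \<times> (nat \<Rightarrow> 'x)) \<Rightarrow> ('y \<times> (nat \<Rightarrow> 'x)))
    \<Rightarrow> ('y \<times> (nat \<Rightarrow> 'x)) \<Rightarrow> ('y \<times> (nat \<Rightarrow> 'x))" where
  "zconj t S = (\<lambda>z. zpermute (inv t) (S (zpermute t z)))"

lemma zconj_Bz:
  assumes t: "bij t" "t 0 = 0" and S: "S \<in> Bz p"
  shows "zconj t S \<in> Bz p"
proof -
  note inv_t = bij_inv_fixing[OF t]
  note Zp_iff = zpermute_in_Zp_iff[OF t] zpermute_in_Zp_iff[OF inv_t]
  obtain C where C: "\<forall>z\<in>Zp p. znorm p (S z) \<le> C * znorm p z"
    using S unfolding Bz_def by blast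
  have "znorm p (zconj t S z) \<le> C * znorm p z" if "z \<in> Zp p" for z
    using C[rule_format, of "zpermute t z"] that
    by (simp add: zconj_def Zp_iff znorm_zpermute t(1) inv_t(1))
  then have bounded: "\<exists>C. \<forall>z\<in>Zp p. znorm p (zconj t S z) \<le> C * znorm p z"
    by blast
  have extensional: "zconj t S z = zzero" if "z \<notin> Zp p" for z
  proof -
    have "zpermute t z \<notin> Zp p"
      using that by (simp add: Zp_iff)
    then have "S (zpermute t z) = zzero"
      using S unfolding Bz_def by blast
    then show ?thesis
      by (simp add: zconj_def)
  qed
  have "zconj t S z \<in> Zp p" if "z \<in> Zp p" for z
    using S that unfolding Bz_def by (simp add: zconj_def Zp_iff)
  moreover have "zconj t S (zadd z w) = zadd (zconj t S z) (zconj t S w)"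
    if "z \<in> Zp p" "w \<in> Zp p" for z w
    using S that unfolding Bz_def by (simp add: zconj_def Zp_iff)
  moreover have "zconj t S (zscale c z) = zscale c (zconj t S z)" if "z \<in> Zp p" for c z
    using S that unfolding Bz_def by (simp add: zconj_def Zp_iff)
  ultimately show ?thesis
    using bounded extensional unfolding Bz_def by blast
qed

lemma zconj_Kz:
  fixes S :: "('y::banach \<times> (nat \<Rightarrow> 'x::banach)) \<Rightarrow> ('y \<times> (nat \<Rightarrow> 'x))"
  assumes t: "bij t" "t 0 = 0" and S: "S \<in> Kz p"
  shows "zconj t S \<in> Kz p"
  unfolding Kz_def
proof (intro CollectI conjI allI impI)
  note inv_t = bij_inv_fixing[OF t]
  have K: "\<forall>u :: nat \<Rightarrow> 'y \<times> (nat \<Rightarrow> 'x). (\<forall>n. u n \<in> Zp p \<and> znorm p (u n) \<le> 1) \<longrightarrow>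
      (\<exists>r z. strict_mono r \<and> z \<in> Zp p \<and> (\<lambda>n. znorm p (zminus (S (u (r n))) z)) \<longlonglongrightarrow> 0)"
    using S unfolding Kz_def mem_Collect_eq by (rule conjunct2)
  have "S \<in> Bz p"
    using S unfolding Kz_def mem_Collect_eq by (rule conjunct1)
  then show "zconj t S \<in> Bz p"
    by (rule zconj_Bz[OF t])
  fix u :: "nat \<Rightarrow> 'y \<times> (nat \<Rightarrow> 'x)"
  assume "\<forall>n. u n \<in> Zp p \<and> znorm p (u n) \<le> 1"
  then have "\<forall>n. zpermute t (u n) \<in> Zp p \<and> znorm p (zpermute t (u n)) \<le> 1"
    by (simp add: zpermute_in_Zp_iff[OF t] znorm_zpermute[OF t(1)])
  then obtain r z where r: "strict_mono r" and z: "z \<in> Zp p"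
    and lim: "(\<lambda>n. znorm p (zminus (S (zpermute t (u (r n)))) z)) \<longlonglongrightarrow> 0"
    using K[rule_format, of "\<lambda>n. zpermute t (u n)"] by blast
  have "znorm p (zminus (zconj t S (u (r n))) (zpermute (inv t) z))
      = znorm p (zminus (S (zpermute t (u (r n)))) z)" for n
    by (simp only: zconj_def zpermute_zminus[symmetric] znorm_zpermute[OF inv_t(1)])
  with r z lim show "\<exists>r z. strict_mono r \<and> z \<in> Zp p \<and>
      (\<lambda>n. znorm p (zminus (zconj t S (u (r n))) z)) \<longlonglongrightarrow> 0"
    by (intro exI[of _ r] exI[of _ "zpermute (inv t) z"]) (simp add: zpermute_in_Zp_iff[OF inv_t])
qed

lemma zconj_IA:
  assumes t: "bij t" "t 0 = 0" and S: "S \<in> IA p A" and B: "B \<subseteq> t ` A"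
  shows "zconj t S \<in> IA p B"
proof -
  have "zconj t S \<in> Kz p"
    using S zconj_Kz[OF t] unfolding IA_def by blast
  moreover have "(\<lambda>y. P0 (zconj t S (J0 y))) = (\<lambda>y. P0 (S (J0 y)))"
    by (simp add: zconj_def)
  moreover have "(\<lambda>x. P0 (zconj t S (Jk k x))) = (\<lambda>x. P0 (S (Jk (inv t k) x)))" for k
    by (simp add: zconj_def zpermute_Jk[OF t(1)])
  moreover have "inv t k \<in> A" if "k \<in> B" for k
    using that B t(1) by (auto simp: bij_is_inj)
  ultimately show ?thesis
    using S unfolding IA_def by auto
qed

lemma opnorm_z_zconj:
  fixes S :: "('y::banach \<times> (nat \<Rightarrow> 'x::banach)) \<Rightarrow> ('y \<times> (nat \<Rightarrow> 'x))"
  assumes t: "bij t" "t 0 = 0"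
  shows "opnorm_z p (zconj t S) = opnorm_z p S"
proof -
  note inv_t = bij_inv_fixing[OF t]
  define ball :: "('y \<times> (nat \<Rightarrow> 'x)) set" where "ball = {z \<in> Zp p. znorm p z \<le> 1}"
  have "zpermute t ` ball = ball"
  proof
    show "zpermute t ` ball \<subseteq> ball"
      by (auto simp: ball_def zpermute_in_Zp_iff[OF t] znorm_zpermute[OF t(1)])
    show "ball \<subseteq> zpermute t ` ball"
    proof
      fix z assume "z \<in> ball"
      then have "zpermute (inv t) z \<in> ball"
        by (simp add: ball_def zpermute_in_Zp_iff[OF inv_t] znorm_zpermute[OF inv_t(1)])
      then show "z \<in> zpermute t ` ball"
        using zpermute_inv(1)[OF t(1)] by (metis image_eqI)
    qed
  qed
  then have "(SUP z\<in>ball. znorm p (S (zpermute t z))) = (SUP w\<in>ball. znorm p (S w))"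
    by (metis image_image)
  then show ?thesis
    by (simp add: opnorm_z_def zconj_def znorm_zpermute[OF inv_t(1)] ball_def)
qed

lemma
  shows zconj_zadd: "zconj t (\<lambda>z. zadd (S z) (T z)) = (\<lambda>z. zadd (zconj t S z) (zconj t T z))"
    and zconj_zscale: "zconj t (\<lambda>z. zscale c (S z)) = (\<lambda>z. zscale c (zconj t S z))"
  by (simp_all add: zconj_def)

lemma zconj_comp:
  assumes "bij t"
  shows "zconj t (S \<circ> T) = zconj t S \<circ> zconj t T"
  by (simp add: zconj_def fun_eq_iff zpermute_inv[OF assms])

lemma zconj_inv:
  assumes "bij t"
  shows "zconj (inv t) (zconj t S) = S" "zconj t (zconj (inv t) S) = S"
  using assms by (simp_all add: zconj_def inv_inv_eq zpermute_inv)

lemma banach_alg_iso_zconj: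
  assumes t: "bij t" "t 0 = 0" and AB: "t ` A = B"
  shows "banach_alg_iso p (IA p A) (IA p B) (zconj t)"
proof -
  note inv_t = bij_inv_fixing[OF t]
  have "inv t ` B = A"
    using AB t(1) by (auto simp: bij_is_inj)
  then have "bij_betw (zconj t) (IA p A) (IA p B)"
    using AB by (intro bij_betw_byWitness[where f' = "zconj (inv t)"])
      (auto simp: zconj_inv[OF t(1)] intro: zconj_IA[OF t] zconj_IA[OF inv_t])
  then show ?thesis
    unfolding banach_alg_iso_def
    by (auto simp: zconj_zadd zconj_zscale zconj_comp[OF t(1)] opnorm_z_zconj[OF t]
        intro!: exI[of _ 1])
qed

theorem lemma2p2:
  fixes p :: real and A B :: "nat set"
  assumes p: "1 < p"
    and AP: "approximation_property TYPE('x::banach)"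
    and strict: "{T :: 'x \<Rightarrow> 'y::banach. approximable_op T} \<subset> {T. compact_op T}"
    and A: "A \<noteq> {}" "A \<subset> {1..}"
    and B: "B \<noteq> {}" "B \<subset> {1..}"
    and perm: "(\<exists>\<sigma>. bij_betw \<sigma> {1..} {1..} \<and> \<sigma> ` A = B)
             \<or> (((finite A \<and> finite B \<and> card A = card B) \<or> (infinite A \<and> infinite B))
                \<and> ((finite ({1..} - A) \<and> finite ({1..} - B) \<and> card ({1..} - A) = card ({1..} - B))
                   \<or> (infinite ({1..} - A) \<and> infinite ({1..} - B))))"
  shows "isomorphic_banach_alg p (IA p A :: (('y \<times> (nat \<Rightarrow> 'x)) \<Rightarrow> ('y \<times> (nat \<Rightarrow> 'x))) set) (IA p B)"
proof -
  have "\<exists>\<sigma>. bij_betw \<sigma> {1..} {1..} \<and> \<sigma> ` A = B"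
    using perm ex_bij_betw_mapping_onto[of "{1::nat..}" A B] A(2) B(2)
    by (metis countableI_type psubset_imp_subset)
  then obtain \<sigma> where \<sigma>: "bij_betw \<sigma> {1..} {1..}" "\<sigma> ` A = B"
    by blast
  define t where "t n = (if n \<in> {1..} then \<sigma> n else n)" for n
  have "bij_betw t ({1..} \<union> (UNIV - {1..})) ({1..} \<union> (UNIV - {1..}))"
    unfolding t_def using \<sigma>(1) by (intro bij_betw_disjoint_Un) (auto simp: bij_betw_def)
  then have "bij t"
    by (simp add: bij_def bij_betw_def)
  moreover have "t 0 = 0" "t ` A = B"
    using \<sigma>(2) A(2) by (auto simp: t_def image_def)
  ultimately have "banach_alg_iso p (IA p A) (IA p B) (zconj t)"
    by (rule banach_alg_iso_zconj)
  then show ?thesis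
    unfolding isomorphic_banach_alg_def by blast
qed

end
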